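(* Let $P$ be a causal logic program (possibly with default negation) and let $P'$ be its unlabelled version. Then: (1) if $I$ is a causal stable model of $P$, then $I^{cl}$ is a stable model of $P'$; (2) if $I'$ is a stable model of $P'$, then there is a unique causal stable model $I$ of $P$ such that $I'=I^{cl}$.
   Context: Causal values are down-sets of causal graphs (reflexively–transitively closed directed graphs on labels, ordered by reverse inclusion), with $0=\emptyset$ and $1$ the set of all causal graphs; $*$ = intersection, $+$ = union, $U\cdot U'={\downarrow}\{G\cdot G'\}$ with $G\cdot G'$ the closure of the graph with vertices $V\cup V'$ and edges $E\cup E'\cup(V\times V')$; a label $l$ denotes ${\downarrow}$ of the graph with only edge $(l,l)$. A causal logic program is a set of rules $t:H\leftarrow B_1,\dots,B_n$ with $t$ a label or $1$, $H$ an atom and $B_i$ literals $p$ or $\mathit{not}\ p$. A causal interpretation maps atoms to causal values; $I(\mathit{not}\ p)=1$ if $I(p)=0$, else $0$. For positive programs, $I$ is a model iff $(I(B_1)*\dots*I(B_n))\cdot t\subseteq I(H)$ for each rule, and the least model exists. The reduct $P^I$ is obtained by removing every rule containing a negative literal $B$ with $I(B)\ne 0$, then deleting all negative literals from the remaining rules. $I$ is a causal stable model of $P$ iff $I$ is the least causal model of $P^I$. The unlabelled version $P'$ replaces every label by $1$ (a standard normal program), and stable models of $P'$ are Gelfond–Lifschitz stable models viewed as maps to $\{0,1\}$. $I^{cl}(p)=0$ if $I(p)=0$, else $1$. *)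

theory Defs
  imports Main
begin

text \<open>A causal graph is represented by its edge set E over labels 'l; its vertex set
is Field E (every vertex carries its reflexive loop).\<close>

definition cgraph :: "('l \<times> 'l) set \<Rightarrow> bool" where
  "cgraph E \<longleftrightarrow> refl_on (Field E) E \<and> trans E"

definition cgraphs :: "('l \<times> 'l) set set" where
  "cgraphs = {E. cgraph E}"

text \<open>G \<le> G' in the causal order iff G \<supseteq> G'. Down-sets are therefore closed
under taking supergraphs.\<close>
definition causal_value :: "('l \<times> 'l) set set \<Rightarrow> bool" where
  "causal_value U \<longleftrightarrow> U \<subseteq> cgraphs \<and> (\<forall>G\<in>U. \<forall>G'. cgraph G' \<and> G \<subseteq> G' \<longrightarrow> G' \<in> U)"

definition gprod :: "('l \<times> 'l) set \<Rightarrow> ('l \<times> 'l) set \<Rightarrow> ('l \<times> 'l) set" where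
  "gprod E E' = (E \<union> E' \<union> (Field E \<times> Field E'))\<^sup>+"

definition vprod :: "('l \<times> 'l) set set \<Rightarrow> ('l \<times> 'l) set set \<Rightarrow> ('l \<times> 'l) set set" where
  "vprod U U' = {G''. cgraph G'' \<and> (\<exists>G\<in>U. \<exists>G'\<in>U'. gprod G G' \<subseteq> G'')}"

definition label_val :: "'l \<Rightarrow> ('l \<times> 'l) set set" where
  "label_val l = {G. cgraph G \<and> {(l, l)} \<subseteq> G}"

datatype 'l tag = One | Lab 'l
datatype 'a lit = Pos 'a | Neg 'a

text \<open>A rule t : H \<leftarrow> B1,...,Bn is a triple (t, H, [B1,...,Bn]).\<close>
type_synonym ('l, 'a) rule = "'l tag \<times> 'a \<times> 'a lit list"
type_synonym ('l, 'a) program = "('l, 'a) rule set"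
type_synonym ('l, 'a) interp = "'a \<Rightarrow> ('l \<times> 'l) set set"

definition tag_val :: "'l tag \<Rightarrow> ('l \<times> 'l) set set" where
  "tag_val t = (case t of One \<Rightarrow> cgraphs | Lab l \<Rightarrow> label_val l)"

definition causal_interp :: "('l, 'a) interp \<Rightarrow> bool" where
  "causal_interp I \<longleftrightarrow> (\<forall>p. causal_value (I p))"

definition lit_val :: "('l, 'a) interp \<Rightarrow> 'a lit \<Rightarrow> ('l \<times> 'l) set set" where
  "lit_val I L = (case L of Pos p \<Rightarrow> I p | Neg p \<Rightarrow> (if I p = {} then cgraphs else {}))"

text \<open>Product (intersection) of the body values; the empty product is 1.\<close>
definition body_val :: "('l, 'a) interp \<Rightarrow> 'a lit list \<Rightarrow> ('l \<times> 'l) set set" where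
  "body_val I B = cgraphs \<inter> (\<Inter>L\<in>set B. lit_val I L)"

definition is_causal_model :: "('l, 'a) program \<Rightarrow> ('l, 'a) interp \<Rightarrow> bool" where
  "is_causal_model P I \<longleftrightarrow> (\<forall>(t, H, B)\<in>P. vprod (body_val I B) (tag_val t) \<subseteq> I H)"

definition is_pos :: "'a lit \<Rightarrow> bool" where
  "is_pos L = (case L of Pos _ \<Rightarrow> True | Neg _ \<Rightarrow> False)"

definition reduct :: "('l, 'a) program \<Rightarrow> ('l, 'a) interp \<Rightarrow> ('l, 'a) program" where
  "reduct P I = {(t, H, filter is_pos B) | t H B.
      (t, H, B) \<in> P \<and> (\<forall>q. Neg q \<in> set B \<longrightarrow> I q = {})}"

definition causal_stable :: "('l, 'a) program \<Rightarrow> ('l, 'a) interp \<Rightarrow> bool" where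
  "causal_stable P I \<longleftrightarrow> causal_interp I \<and> is_causal_model (reduct P I) I \<and>
     (\<forall>J. causal_interp J \<and> is_causal_model (reduct P I) J \<longrightarrow> (\<forall>p. I p \<subseteq> J p))"

definition unlabel :: "('l, 'a) program \<Rightarrow> ('l, 'a) program" where
  "unlabel P = (\<lambda>(t, H, B). (One, H, B)) ` P"

definition gl_reduct :: "('l, 'a) program \<Rightarrow> 'a set \<Rightarrow> ('a \<times> 'a set) set" where
  "gl_reduct P M = {(H, {p. Pos p \<in> set B}) | t H B.
      (t, H, B) \<in> P \<and> (\<forall>q. Neg q \<in> set B \<longrightarrow> q \<notin> M)}"

definition gl_model :: "('a \<times> 'a set) set \<Rightarrow> 'a set \<Rightarrow> bool" where
  "gl_model R M \<longleftrightarrow> (\<forall>(H, Bs)\<in>R. Bs \<subseteq> M \<longrightarrow> H \<in> M)"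

definition gl_stable :: "('l, 'a) program \<Rightarrow> 'a set \<Rightarrow> bool" where
  "gl_stable P M \<longleftrightarrow> gl_model (gl_reduct P M) M \<and>
     (\<forall>M'. gl_model (gl_reduct P M) M' \<longrightarrow> M \<subseteq> M')"

text \<open>Stable models of the (standard) program P', viewed as maps into {0,1}.\<close>
definition std_stable :: "('l, 'a) program \<Rightarrow> ('l, 'a) interp \<Rightarrow> bool" where
  "std_stable P J \<longleftrightarrow> (\<forall>p. J p = {} \<or> J p = cgraphs) \<and> gl_stable P {p. J p \<noteq> {}}"

definition cl :: "('l, 'a) interp \<Rightarrow> ('l, 'a) interp" where
  "cl I = (\<lambda>p. if I p = {} then {} else cgraphs)"

end

theory Submission
  imports Defs
begin

text \<open>
  A causal stable model is, by definition, the least causal model of the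
  reduct of P with respect to itself, and the reduct only depends on which atoms have
  value 0.  The bridge between the two semantics is the support of an interpretation
  (the atoms with nonzero value):
  (a) the support of any causal model of reduct P I is a model of the GL reduct of the
      unlabelled program P' w.r.t. the support of I, and
  (b) the 0/1 interpretation induced by any model of that GL reduct is a causal model
      of reduct P I.
  Hence the support of the least causal model of reduct P I is exactly the least model
  of the GL reduct.  Reducts are positive programs, and positive programs have least
  causal models (the pointwise intersection of all models), which are unique.
  Both parts of the theorem then follow by comparing supports: part (1) directly, and
  part (2) by taking the least causal model of reduct P I' and using uniqueness of
  least models for the uniqueness claim.
\<close>

lemma cgraph_UNIV: "cgraph UNIV"
  by (simp add: cgraph_def refl_on_def trans_def)

lemma UNIV_in_cgraphs: "UNIV \<in> cgraphs"
  using cgraph_UNIV by (simp add: cgraphs_def)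

lemma cgraphs_nonempty: "cgraphs \<noteq> {}"
  using UNIV_in_cgraphs by blast

lemma causal_value_UNIV: "causal_value U \<Longrightarrow> U \<noteq> {} \<Longrightarrow> UNIV \<in> U"
  unfolding causal_value_def using cgraph_UNIV by blast

lemma UNIV_in_tag_val: "UNIV \<in> tag_val t"
  by (cases t) (auto simp: tag_val_def label_val_def cgraph_UNIV UNIV_in_cgraphs)

lemma vprod_subset_cgraphs: "vprod U T \<subseteq> cgraphs"
  by (auto simp: vprod_def cgraphs_def)

lemma vprod_empty: "vprod {} T = {}"
  by (simp add: vprod_def)

lemma vprod_mono: "U \<subseteq> U' \<Longrightarrow> vprod U T \<subseteq> vprod U' T"
  unfolding vprod_def by blast

lemma UNIV_in_vprod: "UNIV \<in> U \<Longrightarrow> UNIV \<in> vprod U (tag_val t)"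
  unfolding vprod_def using UNIV_in_tag_val cgraph_UNIV by blast

definition support :: "('l, 'a) interp \<Rightarrow> 'a set" where
  "support I = {p. I p \<noteq> {}}"

definition ind :: "'a set \<Rightarrow> ('l, 'a) interp" where
  "ind S = (\<lambda>p. if p \<in> S then cgraphs else {})"

lemma causal_interp_ind: "causal_interp (ind S)"
  unfolding causal_interp_def causal_value_def ind_def by (auto simp: cgraphs_def)

lemma support_cl [simp]: "support (cl I) = support I"
  by (simp add: support_def cl_def cgraphs_nonempty)

lemma boolean_eq_cl:
  assumes "\<And>p. I' p = {} \<or> I' p = cgraphs" and "support I' = support J"
  shows "I' = cl J"
proof
  fix p
  have "I' p = {} \<longleftrightarrow> J p = {}" using assms(2) by (auto simp: support_def)
  then show "I' p = cl J p" using assms(1)[of p] by (auto simp: cl_def)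
qed

lemma reduct_support:
  "support I = support J \<Longrightarrow> reduct P I = reduct P J"
  unfolding reduct_def support_def by (metis (mono_tags, lifting) mem_Collect_eq)

definition least_causal_model :: "('l, 'a) program \<Rightarrow> ('l, 'a) interp \<Rightarrow> bool" where
  "least_causal_model Q J \<longleftrightarrow> causal_interp J \<and> is_causal_model Q J \<and>
     (\<forall>K. causal_interp K \<and> is_causal_model Q K \<longrightarrow> (\<forall>p. J p \<subseteq> K p))"

lemma causal_stable_iff_least: "causal_stable P I \<longleftrightarrow> least_causal_model (reduct P I) I"
  by (simp add: causal_stable_def least_causal_model_def)

lemma least_causal_model_unique:
  "least_causal_model Q J \<Longrightarrow> least_causal_model Q K \<Longrightarrow> J = K"
  unfolding least_causal_model_def by (blast intro: ext antisym)

definition positive_program :: "('l, 'a) program \<Rightarrow> bool" where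
  "positive_program Q \<longleftrightarrow> (\<forall>(t, H, B)\<in>Q. \<forall>L\<in>set B. is_pos L)"

lemma positive_reduct: "positive_program (reduct P I)"
  by (auto simp: positive_program_def reduct_def)

lemma body_val_mono:
  assumes "\<forall>L\<in>set B. is_pos L" and "\<And>p. J p \<subseteq> K p"
  shows "body_val J B \<subseteq> body_val K B"
proof -
  have "lit_val J L \<subseteq> lit_val K L" if "L \<in> set B" for L
    using assms that by (cases L) (auto simp: is_pos_def lit_val_def)
  then show ?thesis unfolding body_val_def by blast
qed

text \<open>A positive program has a least causal model: the pointwise intersection of all
  its causal models (the intersection of causal values is a causal value, and
  monotonicity of positive bodies makes it a model).\<close>
lemma positive_least_causal_model:
  assumes pos: "positive_program Q"
  shows "\<exists>J. least_causal_model Q J"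
proof -
  let ?Ms = "{K. causal_interp K \<and> is_causal_model Q K}"
  define J where "J = (\<lambda>p. cgraphs \<inter> (\<Inter>K\<in>?Ms. K p))"
  have below: "J p \<subseteq> K p" if "K \<in> ?Ms" for K p
    using that unfolding J_def by blast
  have "causal_value (J p)" for p
    unfolding causal_value_def
  proof (intro conjI ballI allI impI)
    show "J p \<subseteq> cgraphs" unfolding J_def by blast
  next
    fix G G' assume G: "G \<in> J p" and G': "cgraph G' \<and> G \<subseteq> G'"
    have "G' \<in> K p" if "K \<in> ?Ms" for K
      using that below[OF that] G G' unfolding causal_interp_def causal_value_def by blast
    then show "G' \<in> J p" using G' unfolding J_def cgraphs_def by blast
  qed
  then have interp: "causal_interp J" by (simp add: causal_interp_def)
  have "vprod (body_val J B) (tag_val t) \<subseteq> J H" if r: "(t, H, B) \<in> Q" for t H B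
  proof
    fix G assume G: "G \<in> vprod (body_val J B) (tag_val t)"
    have "G \<in> K H" if K: "K \<in> ?Ms" for K
    proof -
      have "\<forall>L\<in>set B. is_pos L" using pos r unfolding positive_program_def by blast
      then have "G \<in> vprod (body_val K B) (tag_val t)"
        using G vprod_mono body_val_mono below[OF K] by blast
      then show ?thesis using K r unfolding is_causal_model_def by blast
    qed
    then show "G \<in> J H" using G vprod_subset_cgraphs unfolding J_def by blast
  qed
  then have "is_causal_model Q J" unfolding is_causal_model_def by blast
  with interp below show ?thesis unfolding least_causal_model_def by blast
qed

definition gl_least :: "('a \<times> 'a set) set \<Rightarrow> 'a set \<Rightarrow> bool" where
  "gl_least R M \<longleftrightarrow> gl_model R M \<and> (\<forall>M'. gl_model R M' \<longrightarrow> M \<subseteq> M')"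

lemma gl_stable_iff_least: "gl_stable P M \<longleftrightarrow> gl_least (gl_reduct P M) M"
  by (simp add: gl_stable_def gl_least_def)

lemma gl_least_unique: "gl_least R M \<Longrightarrow> gl_least R M' \<Longrightarrow> M = M'"
  unfolding gl_least_def by blast

lemma gl_reduct_unlabel_iff:
  "(H, Bs) \<in> gl_reduct (unlabel P) (support I) \<longleftrightarrow>
   (\<exists>t B. (t, H, B) \<in> P \<and> (\<forall>q. Neg q \<in> set B \<longrightarrow> I q = {}) \<and> Bs = {p. Pos p \<in> set B})"
proof
  assume "(H, Bs) \<in> gl_reduct (unlabel P) (support I)"
  then show "\<exists>t B. (t, H, B) \<in> P \<and> (\<forall>q. Neg q \<in> set B \<longrightarrow> I q = {}) \<and> Bs = {p. Pos p \<in> set B}"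
    by (auto simp: gl_reduct_def unlabel_def support_def)
next
  assume "\<exists>t B. (t, H, B) \<in> P \<and> (\<forall>q. Neg q \<in> set B \<longrightarrow> I q = {}) \<and> Bs = {p. Pos p \<in> set B}"
  then obtain t B where "(t, H, B) \<in> P" "\<forall>q. Neg q \<in> set B \<longrightarrow> I q = {}" "Bs = {p. Pos p \<in> set B}"
    by blast
  moreover from this(1) have "(One, H, B) \<in> unlabel P" unfolding unlabel_def by force
  ultimately show "(H, Bs) \<in> gl_reduct (unlabel P) (support I)"
    unfolding gl_reduct_def support_def by blast
qed

lemma reduct_memI:
  "(t, H, B) \<in> P \<Longrightarrow> (\<forall>q. Neg q \<in> set B \<longrightarrow> I q = {}) \<Longrightarrow> (t, H, filter is_pos B) \<in> reduct P I"
  by (auto simp: reduct_def)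

lemma reduct_memE:
  assumes "(t, H, B') \<in> reduct P I"
  obtains B where "B' = filter is_pos B" "(t, H, B) \<in> P" "\<forall>q. Neg q \<in> set B \<longrightarrow> I q = {}"
  using assms by (auto simp: reduct_def)

text \<open>(a) The support of a causal model of reduct P I is a model of the GL reduct:
  if all positive body atoms are nonzero, the body contains the top graph, hence so
  does the head.\<close>
lemma support_gl_model:
  assumes interp: "causal_interp K" and model: "is_causal_model (reduct P I) K"
  shows "gl_model (gl_reduct (unlabel P) (support I)) (support K)"
  unfolding gl_model_def
proof (clarify)
  fix H Bs assume r: "(H, Bs) \<in> gl_reduct (unlabel P) (support I)" and sub: "Bs \<subseteq> support K"
  then obtain t B where tB: "(t, H, B) \<in> P" and neg: "\<forall>q. Neg q \<in> set B \<longrightarrow> I q = {}"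
    and Bs: "Bs = {p. Pos p \<in> set B}" by (auto simp: gl_reduct_unlabel_iff)
  have "UNIV \<in> lit_val K L" if "L \<in> set (filter is_pos B)" for L
  proof -
    from that have mem: "L \<in> set B" and pos: "is_pos L" by simp_all
    show ?thesis
    proof (cases L)
      case (Pos p)
      then have "K p \<noteq> {}" using mem sub Bs by (auto simp: support_def)
      then show ?thesis using Pos interp causal_value_UNIV[of "K p"] by (simp add: lit_val_def causal_interp_def)
    next
      case (Neg p)
      then show ?thesis using pos by (simp add: is_pos_def)
    qed
  qed
  then have "UNIV \<in> body_val K (filter is_pos B)"
    unfolding body_val_def using UNIV_in_cgraphs by blast
  moreover have "vprod (body_val K (filter is_pos B)) (tag_val t) \<subseteq> K H"
    using model reduct_memI[OF tB neg] unfolding is_causal_model_def by blast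
  ultimately show "H \<in> support K" using UNIV_in_vprod by (auto simp: support_def)
qed

text \<open>(b) The 0/1 interpretation of a model of the GL reduct is a causal model of
  reduct P I: a rule with a head outside S has a positive body atom outside S,
  so its body value is 0.\<close>
lemma ind_causal_model:
  assumes gl: "gl_model (gl_reduct (unlabel P) (support I)) S"
  shows "is_causal_model (reduct P I) (ind S)"
  unfolding is_causal_model_def
proof (clarify)
  fix t H B' G assume r: "(t, H, B') \<in> reduct P I"
    and G: "G \<in> vprod (body_val (ind S) B') (tag_val t)"
  obtain B where B': "B' = filter is_pos B" and tB: "(t, H, B) \<in> P"
    and neg: "\<forall>q. Neg q \<in> set B \<longrightarrow> I q = {}" using r by (rule reduct_memE)
  have "(H, {p. Pos p \<in> set B}) \<in> gl_reduct (unlabel P) (support I)"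
    using tB neg by (auto simp: gl_reduct_unlabel_iff)
  then have head: "{p. Pos p \<in> set B} \<subseteq> S \<Longrightarrow> H \<in> S" using gl unfolding gl_model_def by blast
  show "G \<in> ind S H"
  proof (cases "H \<in> S")
    case True then show ?thesis using G vprod_subset_cgraphs by (auto simp: ind_def)
  next
    case False
    then obtain p where "Pos p \<in> set B'" "p \<notin> S" using head B' by (auto simp: is_pos_def)
    then have "body_val (ind S) B' = {}" by (force simp: body_val_def lit_val_def ind_def)
    then show ?thesis using G vprod_empty by (metis empty_iff)
  qed
qed

lemma support_least_causal_model:
  assumes "least_causal_model (reduct P I) J"
  shows "gl_least (gl_reduct (unlabel P) (support I)) (support J)"
  unfolding gl_least_def
proof (intro conjI allI impI)
  show "gl_model (gl_reduct (unlabel P) (support I)) (support J)"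
    using assms support_gl_model unfolding least_causal_model_def by blast
next
  fix M' assume "gl_model (gl_reduct (unlabel P) (support I)) M'"
  then have below: "J p \<subseteq> ind M' p" for p
    using assms ind_causal_model causal_interp_ind unfolding least_causal_model_def by blast
  have "J p = {}" if "p \<notin> M'" for p using below[of p] that by (simp add: ind_def)
  then show "support J \<subseteq> M'" by (auto simp: support_def)
qed

theorem theorem6:
  fixes P :: "('l, 'a) program"
  shows "(\<forall>I. causal_stable P I \<longrightarrow> std_stable (unlabel P) (cl I)) \<and>
         (\<forall>I'. std_stable (unlabel P) I' \<longrightarrow> (\<exists>!I. causal_stable P I \<and> I' = cl I))"
proof (intro conjI allI impI)
  fix I :: "('l, 'a) interp"
  assume "causal_stable P I"
  then have "gl_least (gl_reduct (unlabel P) (support I)) (support I)"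
    by (simp add: causal_stable_iff_least support_least_causal_model)
  then show "std_stable (unlabel P) (cl I)"
    by (simp add: std_stable_def gl_stable_iff_least flip: support_def) (simp add: cl_def)
next
  fix I' :: "('l, 'a) interp"
  assume st: "std_stable (unlabel P) I'"
  then have boolean: "\<And>p. I' p = {} \<or> I' p = cgraphs"
    and gl: "gl_least (gl_reduct (unlabel P) (support I')) (support I')"
    by (simp_all add: std_stable_def gl_stable_iff_least flip: support_def)
  obtain J where J: "least_causal_model (reduct P I') J"
    using positive_least_causal_model[OF positive_reduct] by blast
  have supp: "support J = support I'"
    using gl_least_unique[OF support_least_causal_model[OF J] gl] .
  show "\<exists>!I. causal_stable P I \<and> I' = cl I"
  proof (rule ex1I[of _ J])
    show "causal_stable P J \<and> I' = cl J"
      using J supp boolean_eq_cl[of I' J, OF boolean supp[symmetric]] reduct_support[OF supp]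
      by (simp add: causal_stable_iff_least)
  next
    fix I assume "causal_stable P I \<and> I' = cl I"
    then have "least_causal_model (reduct P I') I"
      using reduct_support[of I I' P] by (simp add: causal_stable_iff_least)
    then show "I = J" using J least_causal_model_unique by blast
  qed
qed

end
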